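(* Let $\mathcal H$ be a complex Hilbert space, $U\in\mathcal B(\mathcal H)$ unitary, and $\mathcal K\subset\mathcal H$ a closed subspace with orthogonal projection $P_{\mathcal K}$. Put $S=(I-P_{\mathcal K})U$, let $\Theta_S$ be the characteristic function of $S$ (viewed as a map $U^*(\mathcal K)\to\mathcal K$, see context), and let $\tilde U:U^*(\mathcal K)\to\mathcal K$ be the restriction of $U$ to $U^*(\mathcal K)$. Then for every $z$ in the open unit disc $\mathbb D$ and every $k\in\mathcal K$, $$\big\langle (U+zI)(U-zI)^{-1}k,\,k\big\rangle=\big\langle (\tilde U+\Theta_S(z))(\tilde U-\Theta_S(z))^{-1}k,\,k\big\rangle .$$
   Context: For a contraction $T$ on a Hilbert space, $D_T=(I-T^*T)^{1/2}$, $D_{T^*}=(I-TT^* )^{1/2}$, $\mathcal D_T=\overline{D_T\mathcal H}$, $\mathcal D_{T^*}=\overline{D_{T^*}\mathcal H}$, and the characteristic function is $\Theta_T(z)=\big(-T+zD_{T^*}(I-zT^* )^{-1}D_T\big)|_{\mathcal D_T}:\mathcal D_T\to\mathcal D_{T^*}$, $z\in\mathbb D$. For $S=(I-P_{\mathcal K})U$ one has $\mathcal D_S=U^*(\mathcal K)$ and $\mathcal D_{S^*}=\mathcal K$, so $\Theta_S(z):U^*(\mathcal K)\to\mathcal K$, and $\Theta_S(0)=0$. The operator $(\tilde U+\Theta_S(z))(\tilde U-\Theta_S(z))^{-1}$ acts on $\mathcal K$. *)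

theory Defs
  imports "HOL-Analysis.Analysis"
begin

class scaleC =
  fixes scaleC :: "complex \<Rightarrow> 'a \<Rightarrow> 'a" (infixr "*\<^sub>C" 75)

class complex_vector = real_vector + scaleC +
  assumes scaleC_add_right: "a *\<^sub>C (x + y) = a *\<^sub>C x + a *\<^sub>C y"
    and scaleC_add_left: "(a + b) *\<^sub>C x = a *\<^sub>C x + b *\<^sub>C x"
    and scaleC_scaleC: "a *\<^sub>C (b *\<^sub>C x) = (a * b) *\<^sub>C x"
    and scaleC_one: "1 *\<^sub>C x = x"
    and scaleR_scaleC: "scaleR r x = complex_of_real r *\<^sub>C x"

class complex_inner = complex_vector + real_normed_vector +
  fixes cinner :: "'a \<Rightarrow> 'a \<Rightarrow> complex"
  assumes cinner_commute: "cinner x y = cnj (cinner y x)"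
    and cinner_add_left: "cinner (x + y) z = cinner x z + cinner y z"
    and cinner_scaleC_left: "cinner (a *\<^sub>C x) y = a * cinner x y"
    and cinner_self_real: "Im (cinner x x) = 0"
    and cinner_self_nonneg: "0 \<le> Re (cinner x x)"
    and cinner_self_eq_zero: "cinner x x = 0 \<longleftrightarrow> x = 0"
    and norm_eq_sqrt_cinner: "norm x = sqrt (Re (cinner x x))"

class chilbert_space = complex_inner + complete_space

definition clinear :: "('a::complex_vector \<Rightarrow> 'b::complex_vector) \<Rightarrow> bool" where
  "clinear f \<longleftrightarrow> (\<forall>x y. f (x + y) = f x + f y) \<and> (\<forall>c x. f (c *\<^sub>C x) = c *\<^sub>C f x)"

definition bounded_clinear :: "('a::complex_inner \<Rightarrow> 'b::complex_inner) \<Rightarrow> bool" where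
  "bounded_clinear f \<longleftrightarrow> clinear f \<and> (\<exists>K. \<forall>x. norm (f x) \<le> norm x * K)"

definition csubspace :: "'a::complex_vector set \<Rightarrow> bool" where
  "csubspace S \<longleftrightarrow> 0 \<in> S \<and> (\<forall>x\<in>S. \<forall>y\<in>S. x + y \<in> S) \<and> (\<forall>c. \<forall>x\<in>S. c *\<^sub>C x \<in> S)"

definition adj :: "('a::complex_inner \<Rightarrow> 'b::complex_inner) \<Rightarrow> 'b \<Rightarrow> 'a" where
  "adj T = (\<lambda>y. THE w. \<forall>x. cinner (T x) y = cinner x w)"

definition unitary :: "('a::chilbert_space \<Rightarrow> 'a) \<Rightarrow> bool" where
  "unitary U \<longleftrightarrow> bounded_clinear U \<and> U \<circ> adj U = id \<and> adj U \<circ> U = id"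

definition proj :: "'a::complex_inner set \<Rightarrow> 'a \<Rightarrow> 'a" where
  "proj K x = (THE y. y \<in> K \<and> (\<forall>k\<in>K. cinner (x - y) k = 0))"

definition positive_op :: "('a::complex_inner \<Rightarrow> 'a) \<Rightarrow> bool" where
  "positive_op A \<longleftrightarrow> bounded_clinear A \<and> (\<forall>x. Im (cinner (A x) x) = 0 \<and> 0 \<le> Re (cinner (A x) x))"

definition op_sqrt :: "('a::complex_inner \<Rightarrow> 'a) \<Rightarrow> 'a \<Rightarrow> 'a" where
  "op_sqrt A = (THE R. positive_op R \<and> R \<circ> R = A)"

definition inv_on :: "'a set \<Rightarrow> ('a \<Rightarrow> 'b) \<Rightarrow> 'b \<Rightarrow> 'a" where
  "inv_on A f y = (THE x. x \<in> A \<and> f x = y)"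

definition defect :: "('a::chilbert_space \<Rightarrow> 'a) \<Rightarrow> 'a \<Rightarrow> 'a" where
  "defect T = op_sqrt (\<lambda>x. x - adj T (T x))"

definition defect_space :: "('a::chilbert_space \<Rightarrow> 'a) \<Rightarrow> 'a set" where
  "defect_space T = closure (range (defect T))"

text \<open>Theta_T(z) = -T + z D_{T*} (I - z T*)^{-1} D_T, to be applied on the defect space D_T.\<close>
definition char_fun :: "('a::chilbert_space \<Rightarrow> 'a) \<Rightarrow> complex \<Rightarrow> 'a \<Rightarrow> 'a" where
  "char_fun T z x = - T x + z *\<^sub>C defect (adj T)
      (inv_on UNIV (\<lambda>y. y - z *\<^sub>C adj T y) (defect T x))"

end

theory Submission
  imports Defs
begin

text \<open>
  The proof is a direct computation of the characteristic
  function of S on the space D = V(K):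
  \<^item> S* = V (I - P), so I - S* S = V P U and I - S S* = P are orthogonal projections; hence they
    are their own square roots, i.e. the defect operators are D_S = V P U and D_{S*} = P.
  \<^item> For x in D we have S x = 0 and D_S x = x, so Theta_S(z) x = z P y with y = (I - z S*)^{-1} x.
  \<^item> If w solves U w - z w = k, then x0 = V (k + z P w) lies in D, satisfies
    (I - z S*) w = x0 and hence Theta_S(z) x0 = z P w, so x0 is the unique solution in D
    of U x - Theta_S(z) x = k.
  \<^item> Both sides of the identity then equal <k,k> + 2 z <w,k>, using <P w, k> = <w, k>.
\<close>

context complex_vector begin

lemma scaleC_zero_left [simp]: "0 *\<^sub>C x = 0"
proof -
  have "0 *\<^sub>C x + 0 *\<^sub>C x = 0 *\<^sub>C x + 0" using scaleC_add_left[of 0 0 x] by simp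
  then show ?thesis by simp
qed

lemma scaleC_zero_right [simp]: "a *\<^sub>C 0 = 0"
proof -
  have "a *\<^sub>C 0 + a *\<^sub>C 0 = a *\<^sub>C 0 + 0" using scaleC_add_right[of a 0 0] by simp
  then show ?thesis by simp
qed

lemma scaleC_minus_left: "(- a) *\<^sub>C x = - (a *\<^sub>C x)"
proof -
  have "(- a) *\<^sub>C x + a *\<^sub>C x = 0" using scaleC_add_left[of "-a" a x] by simp
  then show ?thesis by (simp add: eq_neg_iff_add_eq_0)
qed

lemma scaleC_minus_right: "a *\<^sub>C (- x) = - (a *\<^sub>C x)"
proof -
  have "a *\<^sub>C (- x) + a *\<^sub>C x = 0" using scaleC_add_right[of a "-x" x] by simp
  then show ?thesis by (simp add: eq_neg_iff_add_eq_0)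
qed

lemma scaleC_diff_right: "a *\<^sub>C (x - y) = a *\<^sub>C x - a *\<^sub>C y"
  by (simp only: diff_conv_add_uminus scaleC_add_right scaleC_minus_right)

lemma minus_scaleC: "- x = (-1) *\<^sub>C x"
  by (simp add: scaleC_minus_left scaleC_one)

end

lemma clinear_add: "clinear f \<Longrightarrow> f (x + y) = f x + f y"
  unfolding clinear_def by blast

lemma clinear_scale: "clinear f \<Longrightarrow> f (c *\<^sub>C x) = c *\<^sub>C f x"
  unfolding clinear_def by blast

lemma clinear_diff: "clinear f \<Longrightarrow> f (x - y) = f x - f y"
  unfolding clinear_def by (metis diff_conv_add_uminus minus_scaleC)

lemma csubspace_0: "csubspace K \<Longrightarrow> 0 \<in> K"
  by (simp add: csubspace_def)

lemma csubspace_add: "csubspace K \<Longrightarrow> x \<in> K \<Longrightarrow> y \<in> K \<Longrightarrow> x + y \<in> K"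
  by (simp add: csubspace_def)

lemma csubspace_scaleC: "csubspace K \<Longrightarrow> x \<in> K \<Longrightarrow> c *\<^sub>C x \<in> K"
  by (simp add: csubspace_def)

lemma csubspace_diff: "csubspace K \<Longrightarrow> x \<in> K \<Longrightarrow> y \<in> K \<Longrightarrow> x - y \<in> K"
  by (metis csubspace_add csubspace_scaleC diff_conv_add_uminus minus_scaleC)

lemma csubspace_scaleR: "csubspace K \<Longrightarrow> x \<in> K \<Longrightarrow> r *\<^sub>R x \<in> K"
  by (simp add: csubspace_scaleC scaleR_scaleC)

subsection \<open>Inner product algebra and the Cauchy-Schwarz inequality\<close>

context complex_inner begin

lemma cinner_add_right: "cinner x (y + z) = cinner x y + cinner x z"
  by (metis cinner_commute cinner_add_left complex_cnj_add)

lemma cinner_scaleC_right: "cinner x (a *\<^sub>C y) = cnj a * cinner x y"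
  by (metis cinner_commute cinner_scaleC_left complex_cnj_mult)

lemma cinner_zero_left [simp]: "cinner 0 y = 0"
  using cinner_scaleC_left[of 0 0 y] by simp

lemma cinner_zero_right [simp]: "cinner x 0 = 0"
  using cinner_commute[of x 0] by simp

lemma cinner_minus_left: "cinner (- x) y = - cinner x y"
  using cinner_scaleC_left[of "-1" x y] by (simp flip: minus_scaleC)

lemma cinner_minus_right: "cinner x (- y) = - cinner x y"
  using cinner_commute[of x "-y"] cinner_commute[of x y] cinner_minus_left[of y x] by simp

lemma cinner_diff_left: "cinner (x - y) z = cinner x z - cinner y z"
  using cinner_add_left[of x "-y" z] by (simp add: cinner_minus_left)

lemma cinner_diff_right: "cinner x (y - z) = cinner x y - cinner x z"
  using cinner_add_right[of x y "-z"] by (simp add: cinner_minus_right)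

lemma cinner_self: "cinner x x = complex_of_real ((norm x)\<^sup>2)"
  using cinner_self_real[of x] cinner_self_nonneg[of x] norm_eq_sqrt_cinner[of x]
  by (simp add: complex_eq_iff)

lemma norm_sq_cinner: "(norm x)\<^sup>2 = Re (cinner x x)"
  by (simp add: cinner_self)

lemma cinner_self_diff_eq_zero: "cinner (x - y) (x - y) = 0 \<Longrightarrow> x = y"
  using cinner_self_eq_zero[of "x - y"] by simp

end

lemma norm_scaleC: "norm (c *\<^sub>C (x::'a::complex_inner)) = cmod c * norm x"
proof -
  have "cinner (c *\<^sub>C x) (c *\<^sub>C x) = (c * cnj c) * cinner x x"
    by (simp add: cinner_scaleC_left cinner_scaleC_right mult_ac)
  then have "(norm (c *\<^sub>C x))\<^sup>2 = (cmod c * norm x)\<^sup>2"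
    by (simp add: norm_sq_cinner power_mult_distrib flip: complex_norm_square)
  then show ?thesis by (simp add: power2_eq_iff_nonneg)
qed

text \<open>Removing from x its component along y diminishes the squared norm by
  |<x,y>|^2 / |y|^2; this yields both Cauchy-Schwarz and the variational
  characterisation of orthogonal projections.\<close>
lemma norm_sq_remove_component:
  fixes x y :: "'a::complex_inner"
  assumes "y \<noteq> 0"
  shows "(norm (x - (cinner x y / complex_of_real ((norm y)\<^sup>2)) *\<^sub>C y))\<^sup>2
       = (norm x)\<^sup>2 - (cmod (cinner x y))\<^sup>2 / (norm y)\<^sup>2"
proof -
  define c where "c = cinner x y"
  define r where "r = (norm y)\<^sup>2"
  have r0: "r > 0" using assms by (simp add: r_def)
  define t where "t = c / complex_of_real r"
  have yy: "cinner y y = complex_of_real r" by (simp add: r_def cinner_self)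
  have "cinner (x - t *\<^sub>C y) (x - t *\<^sub>C y) =
      cinner x x - cnj t * c - t * cnj c + t * cnj t * cinner y y"
    by (simp add: c_def cinner_diff_left cinner_diff_right cinner_scaleC_left
        cinner_scaleC_right cinner_commute[of y x] algebra_simps)
  also have "\<dots> = complex_of_real ((norm x)\<^sup>2) - c * cnj c / complex_of_real r"
    using r0 unfolding yy by (simp add: t_def cinner_self field_simps power2_eq_square)
  also have "\<dots> = complex_of_real ((norm x)\<^sup>2 - (cmod c)\<^sup>2 / r)"
    by (simp flip: complex_norm_square)
  finally show ?thesis
    by (simp add: norm_sq_cinner t_def c_def r_def)
qed

lemma cauchy_schwarz:
  fixes x y :: "'a::complex_inner"
  shows "cmod (cinner x y) \<le> norm x * norm y"
proof (cases "y = 0")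
  case False
  then have "0 \<le> (norm x)\<^sup>2 - (cmod (cinner x y))\<^sup>2 / (norm y)\<^sup>2"
    by (metis norm_sq_remove_component zero_le_power2)
  then have "(cmod (cinner x y))\<^sup>2 \<le> (norm x * norm y)\<^sup>2"
    using False by (simp add: field_simps power_mult_distrib)
  then show ?thesis by (rule power2_le_imp_le) simp
qed simp

lemma continuous_cinner_left: "continuous_on S (\<lambda>a. cinner a (y::'a::complex_inner))"
proof (rule lipschitz_on_continuous_on)
  show "lipschitz_on (norm y) S (\<lambda>a. cinner a y)"
  proof (rule lipschitz_onI)
    fix a b
    have "dist (cinner a y) (cinner b y) = cmod (cinner (a - b) y)"
      by (simp add: dist_norm cinner_diff_left)
    also have "\<dots> \<le> norm (a - b) * norm y" by (rule cauchy_schwarz)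
    finally show "dist (cinner a y) (cinner b y) \<le> norm y * dist a b"
      by (simp add: dist_norm mult.commute)
  qed simp
qed

lemma bounded_clinear_continuous:
  assumes "bounded_clinear f"
  shows "continuous_on S f"
proof -
  from assms obtain K where K: "\<And>x. norm (f x) \<le> norm x * K" and l: "clinear f"
    unfolding bounded_clinear_def by blast
  have "lipschitz_on (max K 0) S f"
  proof (rule lipschitz_onI)
    fix a b
    have "dist (f a) (f b) = norm (f (a - b))" by (simp add: dist_norm clinear_diff[OF l])
    also have "\<dots> \<le> norm (a - b) * K" by (rule K)
    also have "\<dots> \<le> max K 0 * dist a b"
      using mult_right_mono[of K "max K 0" "norm (a - b)"] by (simp add: dist_norm mult.commute)
    finally show "dist (f a) (f b) \<le> max K 0 * dist a b" .
  qed simp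
  then show ?thesis by (rule lipschitz_on_continuous_on)
qed

lemma parallelogram:
  fixes a b :: "'a::complex_inner"
  shows "(norm (a - b))\<^sup>2 + (norm (a + b))\<^sup>2 = 2 * (norm a)\<^sup>2 + 2 * (norm b)\<^sup>2"
  unfolding norm_sq_cinner
  by (simp add: cinner_add_left cinner_add_right cinner_diff_left cinner_diff_right)

subsection \<open>Orthogonal projection onto a closed subspace\<close>

lemma best_approximation_orthogonal:
  fixes x y :: "'a::complex_inner"
  assumes K: "csubspace K" and y: "y \<in> K" and best: "\<forall>k\<in>K. norm (x - y) \<le> norm (x - k)"
    and k: "k \<in> K"
  shows "cinner (x - y) k = 0"
proof (cases "k = 0")
  case False
  define t where "t = cinner (x - y) k / complex_of_real ((norm k)\<^sup>2)"
  have "y + t *\<^sub>C k \<in> K" using K y k by (simp add: csubspace_add csubspace_scaleC)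
  then have "norm (x - y) \<le> norm ((x - y) - t *\<^sub>C k)"
    using best by (metis diff_diff_eq)
  then have "(norm (x - y))\<^sup>2 \<le> (norm ((x - y) - t *\<^sub>C k))\<^sup>2"
    by (simp add: power_mono)
  also have "\<dots> = (norm (x - y))\<^sup>2 - (cmod (cinner (x - y) k))\<^sup>2 / (norm k)\<^sup>2"
    unfolding t_def by (rule norm_sq_remove_component[OF False])
  finally have "(cmod (cinner (x - y) k))\<^sup>2 / (norm k)\<^sup>2 \<le> 0" by simp
  then show ?thesis using False by (simp add: divide_le_0_iff)
qed simp

text \<open>In a subspace, a sequence whose distances to x approach a lower bound d of all
  distances is Cauchy (by the parallelogram law, since midpoints stay in K).\<close>
lemma minimizing_sequence_Cauchy:
  fixes x :: "'a::complex_inner" and e :: "nat \<Rightarrow> real"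
  assumes K: "csubspace K" and f: "\<And>n. f n \<in> K" and d0: "0 \<le> d"
    and lower: "\<And>k. k \<in> K \<Longrightarrow> d \<le> norm (x - k)"
    and close: "\<And>n. norm (x - f n) \<le> d + e n"
    and e: "\<And>n. 0 < e n" "\<And>n. e n \<le> 1" "e \<longlonglongrightarrow> 0"
  shows "Cauchy f"
proof -
  have sq: "(norm (x - f n))\<^sup>2 \<le> d\<^sup>2 + (2 * d + 1) * e n" for n
  proof -
    have "(norm (x - f n))\<^sup>2 \<le> (d + e n)\<^sup>2" using close[of n] d0 e(1)[of n] by (simp add: power_mono)
    also have "\<dots> = d\<^sup>2 + (2 * d) * e n + e n * e n" by (simp add: power2_eq_square algebra_simps)
    also have "e n * e n \<le> e n" using e(1,2)[of n] by (simp add: mult_le_cancel_right1)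
    finally show ?thesis by (simp add: algebra_simps)
  qed
  have bound: "(norm (f m - f n))\<^sup>2 \<le> 2 * (2 * d + 1) * (e m + e n)" for m n
  proof -
    define a where "a = x - f n"
    define b where "b = x - f m"
    have mid: "(1/2::real) *\<^sub>R (f n + f m) \<in> K" using K f by (simp add: csubspace_add csubspace_scaleR)
    have "a + b = 2 *\<^sub>R (x - (1/2::real) *\<^sub>R (f n + f m))"
      by (simp add: a_def b_def algebra_simps scaleR_2)
    then have "2 * d \<le> norm (a + b)" using lower[OF mid] by simp
    then have ab: "(2 * d)\<^sup>2 \<le> (norm (a + b))\<^sup>2" by (rule power_mono) (simp add: d0)
    have "(norm (f m - f n))\<^sup>2 = 2 * (norm a)\<^sup>2 + 2 * (norm b)\<^sup>2 - (norm (a + b))\<^sup>2"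
      using parallelogram[of a b] by (simp add: a_def b_def)
    also have "\<dots> \<le> 2 * (2 * d + 1) * (e m + e n)"
      using sq[of n] sq[of m] ab unfolding a_def b_def by (simp add: power2_eq_square algebra_simps)
    finally show ?thesis .
  qed
  show "Cauchy f"
  proof (rule metric_CauchyI)
    fix eps :: real assume eps: "0 < eps"
    have "0 < eps\<^sup>2 / (4 * (2 * d + 1))" using eps d0 by simp
    then obtain N where N: "\<And>n. n \<ge> N \<Longrightarrow> e n < eps\<^sup>2 / (4 * (2 * d + 1))"
      using e(3) e(1) by (metis (no_types, lifting) LIMSEQ_D abs_of_pos diff_zero real_norm_def)
    have "dist (f m) (f n) < eps" if "N \<le> m" "N \<le> n" for m n
    proof -
      have "(norm (f m - f n))\<^sup>2 < eps\<^sup>2"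
        using bound[of m n] N[OF that(1)] N[OF that(2)] d0 by (simp add: field_simps)
      then show ?thesis using eps by (simp add: dist_norm power_less_imp_less_base)
    qed
    then show "\<exists>M. \<forall>m\<ge>M. \<forall>n\<ge>M. dist (f m) (f n) < eps" by blast
  qed
qed

lemma best_approximation_exists:
  fixes x :: "'a::chilbert_space"
  assumes K: "csubspace K" and cl: "closed K"
  shows "\<exists>y\<in>K. \<forall>k\<in>K. norm (x - y) \<le> norm (x - k)"
proof -
  define d where "d = infdist x K"
  define e :: "nat \<Rightarrow> real" where "e = (\<lambda>n. inverse (real (Suc n)))"
  have Kne: "K \<noteq> {}" using csubspace_0[OF K] by blast
  have lower: "d \<le> norm (x - k)" if "k \<in> K" for k
    using infdist_le[OF that, of x] by (simp add: d_def dist_norm)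
  have "\<exists>a\<in>K. dist x a < d + e n" for n
  proof -
    have "(INF a\<in>K. dist x a) < d + e n"
      using infdist_notempty[OF Kne, of x] by (simp add: d_def e_def)
    then show ?thesis
      by (subst (asm) cINF_less_iff[OF Kne]) (auto intro: bdd_belowI[of _ 0])
  qed
  then obtain f where f: "\<And>n. f n \<in> K" and fd: "\<And>n. dist x (f n) < d + e n"
    by metis
  have e: "0 < e n" "e n \<le> 1" for n by (auto simp: e_def field_simps)
  have e_lim: "e \<longlonglongrightarrow> 0" unfolding e_def by (rule LIMSEQ_inverse_real_of_nat)
  have "Cauchy f"
    by (rule minimizing_sequence_Cauchy[OF K f _ lower _ e e_lim])
       (use fd in \<open>auto simp: d_def infdist_nonneg dist_norm less_imp_le\<close>)
  then obtain y where y: "f \<longlonglongrightarrow> y" using Cauchy_convergent_iff convergent_def by blast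
  have yK: "y \<in> K" using closed_sequentially[OF cl f y] .
  have "dist x y \<le> d"
  proof (rule LIMSEQ_le)
    show "(\<lambda>n. dist x (f n)) \<longlonglongrightarrow> dist x y" by (intro tendsto_intros y)
    show "(\<lambda>n. d + e n) \<longlonglongrightarrow> d"
      using tendsto_add[OF tendsto_const e_lim, of d] by simp
    show "\<exists>N. \<forall>n\<ge>N. dist x (f n) \<le> d + e n"
      using fd less_imp_le by blast
  qed
  then show ?thesis using yK lower by (force simp: dist_norm)
qed

lemma proj_unique:
  fixes x :: "'a::complex_inner"
  assumes K: "csubspace K" and y: "y \<in> K" and orth: "\<forall>k\<in>K. cinner (x - y) k = 0"
  shows "proj K x = y"
  unfolding proj_def
proof (rule the_equality)
  show "y \<in> K \<and> (\<forall>k\<in>K. cinner (x - y) k = 0)" using y orth by blast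
  fix y' assume y': "y' \<in> K \<and> (\<forall>k\<in>K. cinner (x - y') k = 0)"
  have d: "y' - y \<in> K" using K y y' by (simp add: csubspace_diff)
  have "cinner (y' - y) (y' - y) = cinner (x - y) (y' - y) - cinner (x - y') (y' - y)"
    by (simp add: cinner_diff_left)
  also have "\<dots> = 0" using orth y' d by simp
  finally show "y' = y" by (rule cinner_self_diff_eq_zero)
qed

lemma proj_exists:
  fixes x :: "'a::chilbert_space"
  assumes K: "csubspace K" and cl: "closed K"
  shows "proj K x \<in> K \<and> (\<forall>k\<in>K. cinner (x - proj K x) k = 0)"
proof -
  obtain y where y: "y \<in> K" and best: "\<forall>k\<in>K. norm (x - y) \<le> norm (x - k)"
    using best_approximation_exists[OF K cl] by blast
  have "\<forall>k\<in>K. cinner (x - y) k = 0" using best_approximation_orthogonal[OF K y best] by blast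
  then show ?thesis using proj_unique[OF K y] y by simp
qed

locale closed_csubspace =
  fixes K :: "'a::chilbert_space set"
  assumes K: "csubspace K" and cl: "closed K"
begin

lemma proj_in: "proj K x \<in> K"
  using proj_exists[OF K cl] by blast

lemma proj_orth: "k \<in> K \<Longrightarrow> cinner (x - proj K x) k = 0"
  using proj_exists[OF K cl] by blast

lemma proj_orth': "k \<in> K \<Longrightarrow> cinner k (x - proj K x) = 0"
  by (metis proj_orth cinner_commute complex_cnj_zero)

lemma proj_fixes: "k \<in> K \<Longrightarrow> proj K k = k"
  by (rule proj_unique[OF K]) auto

lemma proj_idem: "proj K (proj K x) = proj K x"
  by (rule proj_fixes[OF proj_in])

lemma proj_clinear: "clinear (proj K)"
  unfolding clinear_def
proof safe
  fix x y
  show "proj K (x + y) = proj K x + proj K y"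
  proof (rule proj_unique[OF K])
    show "proj K x + proj K y \<in> K" using K proj_in by (simp add: csubspace_add)
    have eq: "x + y - (proj K x + proj K y) = (x - proj K x) + (y - proj K y)" by simp
    show "\<forall>k\<in>K. cinner (x + y - (proj K x + proj K y)) k = 0"
      unfolding eq by (simp add: cinner_add_left proj_orth)
  qed
next
  fix c x
  show "proj K (c *\<^sub>C x) = c *\<^sub>C proj K x"
  proof (rule proj_unique[OF K])
    show "c *\<^sub>C proj K x \<in> K" using K proj_in by (simp add: csubspace_scaleC)
    show "\<forall>k\<in>K. cinner (c *\<^sub>C x - c *\<^sub>C proj K x) k = 0"
      by (simp add: proj_orth cinner_scaleC_left flip: scaleC_diff_right)
  qed
qed

lemma proj_diff: "proj K (x - y) = proj K x - proj K y"
  by (rule clinear_diff[OF proj_clinear])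

lemma proj_complement: "proj K (x - proj K x) = 0"
  by (simp add: proj_diff proj_idem)

lemma proj_selfadjoint: "cinner (proj K x) y = cinner x (proj K y)"
proof -
  have "cinner (proj K x) y = cinner (proj K x) (proj K y)"
    using proj_orth'[OF proj_in, of x y] by (simp add: cinner_diff_right)
  also have "\<dots> = cinner x (proj K y)"
    using proj_orth[OF proj_in, of x y] by (simp add: cinner_diff_left)
  finally show ?thesis .
qed

lemma proj_pythagoras: "(norm x)\<^sup>2 = (norm (proj K x))\<^sup>2 + (norm (x - proj K x))\<^sup>2"
proof -
  have o1: "cinner (proj K x) (x - proj K x) = 0" by (rule proj_orth'[OF proj_in])
  have o2: "cinner (x - proj K x) (proj K x) = 0" by (rule proj_orth[OF proj_in])
  have "cinner x x = cinner (proj K x + (x - proj K x)) (proj K x + (x - proj K x))" by simp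
  also have "\<dots> = cinner (proj K x) (proj K x) + cinner (x - proj K x) (x - proj K x)"
    using o1 o2 by (simp only: cinner_add_left cinner_add_right) simp
  finally show ?thesis unfolding norm_sq_cinner by simp
qed

lemma proj_norm_le: "norm (proj K x) \<le> norm x"
  using proj_pythagoras[of x] by (simp add: power2_le_imp_le)

lemma proj_complement_norm_le: "norm (x - proj K x) \<le> norm x"
  using proj_pythagoras[of x] by (simp add: power2_le_imp_le)

lemma proj_bounded_clinear: "bounded_clinear (proj K)"
  unfolding bounded_clinear_def using proj_clinear proj_norm_le by (metis mult.right_neutral)

end

subsection \<open>Riesz representation and Hilbert space adjoints\<close>

text \<open>Every continuous linear functional is an inner product with a fixed vector; the
  representing vector is built from the orthogonal complement of the kernel.\<close>
lemma riesz_representation: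
  fixes f :: "'a::chilbert_space \<Rightarrow> complex"
  assumes add: "\<And>x y. f (x + y) = f x + f y" and sc: "\<And>c x. f (c *\<^sub>C x) = c * f x"
    and cont: "continuous_on UNIV f"
  shows "\<exists>w. \<forall>x. f x = cinner x w"
proof (cases "\<forall>x. f x = 0")
  case True then show ?thesis by (intro exI[of _ 0]) simp
next
  case False
  then obtain u where u: "f u \<noteq> 0" by blast
  define N where "N = {x. f x = 0}"
  have f0: "f 0 = 0" using sc[of 0 0] by simp
  have fm: "f (- x) = - f x" for x using sc[of "-1" x] by (simp flip: minus_scaleC)
  have fd: "f (x - y) = f x - f y" for x y using add[of x "-y"] fm[of y] by simp
  have "csubspace N" unfolding csubspace_def N_def using f0 add sc by simp
  moreover have "closed N" unfolding N_def by (rule closed_Collect_eq[OF cont continuous_on_const])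
  ultimately interpret N: closed_csubspace N by unfold_locales
  define v where "v = u - proj N u"
  have fv: "f v = f u" using N.proj_in[of u] by (simp add: v_def fd N_def)
  have "v \<noteq> 0" using fv u f0 by auto
  then have vv: "cinner v v \<noteq> 0" by (simp add: cinner_self_eq_zero)
  have "f x = cinner x ((cnj (f v) / cnj (cinner v v)) *\<^sub>C v)" for x
  proof -
    have "x - (f x / f v) *\<^sub>C v \<in> N" using fv u by (simp add: N_def fd sc)
    then have "cinner (x - (f x / f v) *\<^sub>C v) v = 0"
      using N.proj_orth'[of _ u] by (simp add: v_def)
    then have "cinner x v = (f x / f v) * cinner v v"
      by (simp add: cinner_diff_left cinner_scaleC_left)
    then show ?thesis using vv fv u by (simp add: cinner_scaleC_right)
  qed
  then show ?thesis by blast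
qed

lemma adj_eq:
  assumes "\<And>x. cinner (T x) y = cinner x w"
  shows "adj T y = w"
  unfolding adj_def
proof (rule the_equality)
  show "\<forall>x. cinner (T x) y = cinner x w" using assms by blast
  fix w' assume "\<forall>x. cinner (T x) y = cinner x w'"
  then have "cinner (w' - w) (w' - w) = 0"
    using assms[of "w' - w"] by (simp add: cinner_diff_right)
  then show "w' = w" by (rule cinner_self_diff_eq_zero)
qed

lemma adj_cinner:
  fixes T :: "'a::chilbert_space \<Rightarrow> 'b::complex_inner"
  assumes T: "bounded_clinear T"
  shows "cinner (T x) y = cinner x (adj T y)"
proof -
  have l: "clinear T" using T by (simp add: bounded_clinear_def)
  have "continuous_on UNIV (\<lambda>x. cinner (T x) y)"
    by (rule continuous_on_compose2[OF continuous_cinner_left bounded_clinear_continuous[OF T]]) auto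
  then obtain w where "\<And>x. cinner (T x) y = cinner x w"
    using riesz_representation[of "\<lambda>x. cinner (T x) y"]
    by (auto simp: clinear_add[OF l] clinear_scale[OF l] cinner_add_left cinner_scaleC_left)
  then show ?thesis using adj_eq[of T y] by simp
qed

subsection \<open>The square root of an orthogonal projection\<close>

text \<open>A positive operator is self-adjoint (polarisation with x + y and x + i y).\<close>
lemma positive_op_selfadjoint:
  assumes R: "positive_op R"
  shows "cinner (R x) y = cinner x (R y)"
proof -
  have lR: "clinear R" using R by (simp add: positive_op_def bounded_clinear_def)
  have real: "Im (cinner (R x) x) = 0" for x using R by (simp add: positive_op_def)
  define a where "a = cinner (R x) y"
  define b where "b = cinner (R y) x"
  have "Im (cinner (R (x + y)) (x + y)) = 0" by (rule real)
  then have i1: "Im (a + b) = 0"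
    using real[of x] real[of y]
    by (simp add: clinear_add[OF lR] cinner_add_left cinner_add_right a_def b_def)
  have "Im (cinner (R (x + \<i> *\<^sub>C y)) (x + \<i> *\<^sub>C y)) = 0" by (rule real)
  then have i2: "Im (- \<i> * a + \<i> * b) = 0"
    using real[of x] real[of y]
    by (simp add: clinear_add[OF lR] clinear_scale[OF lR] cinner_add_left cinner_add_right
        cinner_scaleC_left cinner_scaleC_right a_def b_def)
  have "a = cnj b" using i1 i2 by (simp add: complex_eq_iff)
  then show ?thesis by (simp add: a_def b_def flip: cinner_commute)
qed

text \<open>A bounded idempotent self-adjoint operator Q is its own positive square root:
  a positive R with R R = Q vanishes on the kernel of Q and fixes the range of Q.\<close>
lemma op_sqrt_orthogonal_projection:
  fixes Q :: "'a::complex_inner \<Rightarrow> 'a"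
  assumes bQ: "bounded_clinear Q" and idQ: "\<And>x. Q (Q x) = Q x"
    and saQ: "\<And>x y. cinner (Q x) y = cinner x (Q y)"
  shows "op_sqrt Q = Q"
  unfolding op_sqrt_def
proof (rule the_equality)
  have lQ: "clinear Q" using bQ by (simp add: bounded_clinear_def)
  have "cinner (Q x) x = cinner (Q x) (Q x)" for x using saQ[of "Q x" x] idQ[of x] by simp
  then show "positive_op Q \<and> Q \<circ> Q = Q"
    using bQ idQ by (auto simp: positive_op_def cinner_self)
  fix R assume R: "positive_op R \<and> R \<circ> R = Q"
  have lR: "clinear R" using R by (simp add: positive_op_def bounded_clinear_def)
  have RR: "R (R x) = Q x" for x using R by (metis comp_apply)
  show "R = Q"
  proof
    fix x
    have kernel: "R (x - Q x) = 0"
    proof -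
      have "Q (x - Q x) = 0" by (simp add: clinear_diff[OF lQ] idQ)
      then have "cinner (R (x - Q x)) (R (x - Q x)) = 0"
        using positive_op_selfadjoint[OF conjunct1[OF R], of "x - Q x" "R (x - Q x)"]
        by (simp add: RR)
      then show ?thesis using cinner_self_eq_zero by blast
    qed
    have range: "R (Q x) = Q x"
    proof -
      define u where "u = R (Q x) - Q x"
      have "R u = - u" by (simp add: u_def clinear_diff[OF lR] RR idQ)
      moreover have "0 \<le> Re (cinner (R u) u)" using R by (simp add: positive_op_def)
      ultimately have "cinner u u = 0" by (simp add: cinner_minus_left cinner_self)
      then show ?thesis using cinner_self_eq_zero[of u] by (simp add: u_def)
    qed
    have "R x = R (Q x) + R (x - Q x)" by (simp flip: clinear_add[OF lR])
    then show "R x = Q x" using kernel range by simp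
  qed
qed

subsection \<open>Inverses on a set and contractive perturbations of the identity\<close>

lemma inv_on_eq:
  assumes "\<exists>!x. x \<in> A \<and> f x = b" and "x \<in> A" and "f x = b"
  shows "inv_on A f b = x"
  unfolding inv_on_def using assms(2,3) by (intro the1_equality[OF assms(1)]) blast

lemma inv_on_spec:
  assumes "\<exists>!x. x \<in> A \<and> f x = b"
  shows "inv_on A f b \<in> A \<and> f (inv_on A f b) = b"
  unfolding inv_on_def by (rule theI'[OF assms])

text \<open>If T is a contraction with constant c < 1, then I - T is bijective
  (Banach fixed point theorem applied to x \<mapsto> b + T x).\<close>
lemma contraction_perturbation_bij:
  fixes T :: "'a::{real_normed_vector, complete_space} \<Rightarrow> 'a"
  assumes c: "0 \<le> c" "c < 1" and contr: "\<And>x y. norm (T x - T y) \<le> c * norm (x - y)"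
  shows "\<exists>!x. x \<in> UNIV \<and> x - T x = b"
proof -
  have "\<exists>!x. b + T x = x"
    by (rule banach_fix_type[OF c]) (simp add: dist_norm contr)
  moreover have "b + T x = x \<longleftrightarrow> x - T x = b" for x by (auto simp: algebra_simps)
  ultimately show ?thesis by simp
qed

subsection \<open>The compression S = (I - P) U of a unitary operator\<close>

locale unitary_compression = closed_csubspace K for K :: "'a::chilbert_space set" +
  fixes U :: "'a \<Rightarrow> 'a"
  assumes unitary: "unitary U"
begin

abbreviation "V \<equiv> adj U"
abbreviation "P \<equiv> proj K"
definition "S = (\<lambda>x. U x - P (U x))"

lemma U_clinear: "clinear U"
  using unitary by (simp add: unitary_def bounded_clinear_def)

lemma U_V: "U (V y) = y"
  using unitary by (metis comp_apply id_apply unitary_def)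

lemma V_U: "V (U y) = y"
  using unitary by (metis comp_apply id_apply unitary_def)

lemma U_adj: "cinner (U x) y = cinner x (V y)"
  using unitary by (simp add: unitary_def adj_cinner)

lemma V_adj: "cinner (V x) y = cinner x (U y)"
  by (metis U_adj cinner_commute)

lemma U_isometry: "norm (U x) = norm x"
  by (simp add: norm_eq_sqrt_cinner U_adj V_U)

lemma V_isometry: "norm (V x) = norm x"
  by (metis U_V U_isometry)

lemma V_clinear: "clinear V"
  unfolding clinear_def
proof safe
  show "V (x + y) = V x + V y" for x y
    by (metis U_V V_U clinear_add[OF U_clinear])
  show "V (c *\<^sub>C x) = c *\<^sub>C V x" for c x
    by (metis U_V V_U clinear_scale[OF U_clinear])
qed

lemmas U_linear = clinear_add[OF U_clinear] clinear_diff[OF U_clinear] clinear_scale[OF U_clinear]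
lemmas V_linear = clinear_add[OF V_clinear] clinear_diff[OF V_clinear] clinear_scale[OF V_clinear]
lemmas P_linear = clinear_add[OF proj_clinear] clinear_diff[OF proj_clinear] clinear_scale[OF proj_clinear]

lemma adj_S: "adj S = (\<lambda>y. V (y - P y))"
proof
  fix y
  show "adj S y = V (y - P y)"
  proof (rule adj_eq)
    fix x
    have "cinner (S x) y = cinner (U x) y - cinner (P (U x)) y" by (simp add: S_def cinner_diff_left)
    also have "\<dots> = cinner (U x) (y - P y)" by (simp add: proj_selfadjoint cinner_diff_right)
    finally show "cinner (S x) y = cinner x (V (y - P y))" by (simp add: U_adj)
  qed
qed

lemma adj_adj_S: "adj (adj S) = S"
proof
  fix y
  show "adj (adj S) y = S y"
  proof (rule adj_eq)
    fix x
    have "cinner (adj S x) y = cinner x (U y) - cinner (P x) (U y)"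
      by (simp add: adj_S V_adj cinner_diff_left)
    also have "\<dots> = cinner x (S y)" by (simp add: proj_selfadjoint cinner_diff_right S_def)
    finally show "cinner (adj S x) y = cinner x (S y)" .
  qed
qed

text \<open>I - S* S = V P U is an orthogonal projection, hence equal to its square root D_S.\<close>
lemma defect_S: "defect S = (\<lambda>x. V (P (U x)))"
proof -
  have "x - adj S (S x) = V (P (U x))" for x
  proof -
    have "adj S (S x) = V (S x - P (S x))" by (simp only: adj_S)
    also have "\<dots> = V (U x - P (U x))" by (simp add: S_def proj_complement)
    also have "\<dots> = x - V (P (U x))" by (simp add: V_linear V_U)
    finally show ?thesis by simp
  qed
  then have defect_sq: "(\<lambda>x. x - adj S (S x)) = (\<lambda>x. V (P (U x)))" by blast
  have "norm (V (P (U x))) \<le> norm x * 1" for x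
    using proj_norm_le[of "U x"] by (simp add: V_isometry U_isometry)
  then have "bounded_clinear (\<lambda>x. V (P (U x)))"
    unfolding bounded_clinear_def clinear_def
    by (auto simp: U_linear P_linear V_linear intro!: exI[of _ 1])
  then show ?thesis unfolding defect_def defect_sq
    by (rule op_sqrt_orthogonal_projection) (simp_all add: U_V proj_idem V_adj proj_selfadjoint U_adj)
qed

text \<open>I - S S* = P is an orthogonal projection, hence equal to its square root D_{S*}.\<close>
lemma defect_adj_S: "defect (adj S) = P"
proof -
  have "adj (adj S) (adj S x) = S (V (x - P x))" for x by (subst adj_adj_S) (simp only: adj_S)
  then have "(\<lambda>x. x - adj (adj S) (adj S x)) = P"
    by (simp add: S_def U_V proj_complement)
  then show ?thesis unfolding defect_def
    by (simp add: op_sqrt_orthogonal_projection proj_bounded_clinear proj_idem proj_selfadjoint)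
qed

lemma U_I_minus_z_adj_S: "U (y - z *\<^sub>C adj S y) = U y - z *\<^sub>C y + z *\<^sub>C P y"
  by (simp add: adj_S U_linear U_V scaleC_diff_right)

text \<open>I - z S* is invertible for z in the unit disc, since S* is a contraction.\<close>
lemma I_minus_z_adj_S_bij:
  assumes "cmod z < 1"
  shows "\<exists>!y. y \<in> UNIV \<and> y - z *\<^sub>C adj S y = b"
proof (rule contraction_perturbation_bij[of "cmod z"])
  fix x y
  have "z *\<^sub>C adj S x - z *\<^sub>C adj S y = z *\<^sub>C V ((x - y) - P (x - y))"
    by (simp add: adj_S V_linear P_linear algebra_simps flip: scaleC_diff_right)
  then show "norm (z *\<^sub>C adj S x - z *\<^sub>C adj S y) \<le> cmod z * norm (x - y)"
    by (simp add: norm_scaleC V_isometry mult_left_mono proj_complement_norm_le)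
qed (use assms in auto)

lemma U_minus_z_bij:
  assumes "cmod z < 1"
  shows "\<exists>!y. y \<in> UNIV \<and> U y - z *\<^sub>C y = b"
proof -
  have "\<exists>!y. y \<in> UNIV \<and> y - z *\<^sub>C V y = V b"
  proof (rule contraction_perturbation_bij[of "cmod z"])
    show "norm (z *\<^sub>C V x - z *\<^sub>C V y) \<le> cmod z * norm (x - y)" for x y
      by (simp add: norm_scaleC V_isometry flip: scaleC_diff_right V_linear(2))
  qed (use assms in auto)
  moreover have "y - z *\<^sub>C V y = V b \<longleftrightarrow> U y - z *\<^sub>C y = b" for y
    by (metis U_V V_U U_linear(2,3))
  ultimately show ?thesis by simp
qed

text \<open>On D = V(K) the operator S vanishes and D_S is the identity, so there
  Theta_S(z) x = z P (I - z S*)^{-1} x.\<close>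
lemma char_fun_on_DS:
  assumes "U x \<in> K"
  shows "char_fun S z x = z *\<^sub>C P (inv_on UNIV (\<lambda>y. y - z *\<^sub>C adj S y) x)"
proof -
  have "S x = 0" "V (P (U x)) = x" using assms by (simp_all add: S_def proj_fixes V_U)
  then show ?thesis by (simp add: char_fun_def defect_S defect_adj_S)
qed

lemma DS_solution:
  assumes z: "cmod z < 1" and k: "k \<in> K" and w: "U w - z *\<^sub>C w = k"
  defines "x0 \<equiv> V (k + z *\<^sub>C P w)"
  shows "char_fun S z x0 = z *\<^sub>C P w"
    and "inv_on (V ` K) (\<lambda>x. U x - char_fun S z x) k = x0"
proof -
  let ?R = "\<lambda>y. y - z *\<^sub>C adj S y"
  have inv_R: "inv_on UNIV ?R x = y" if "?R y = x" for x y
    by (rule inv_on_eq[OF I_minus_z_adj_S_bij[OF z] _ that]) simp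
  have U_x0: "U x0 = k + z *\<^sub>C P w" by (simp add: x0_def U_V)
  have U_x0_in: "U x0 \<in> K" unfolding U_x0 using K k proj_in by (simp add: csubspace_add csubspace_scaleC)
  have "U (?R w) = U x0" using w by (simp add: U_I_minus_z_adj_S U_x0)
  then have "?R w = x0" by (metis V_U)
  then show theta_x0: "char_fun S z x0 = z *\<^sub>C P w"
    by (simp add: char_fun_on_DS[OF U_x0_in] inv_R)
  have unique: "x = x0" if "x \<in> V ` K" and sol: "U x - char_fun S z x = k" for x
  proof -
    have U_x_in: "U x \<in> K" using that(1) U_V by auto
    define y where "y = inv_on UNIV ?R x"
    have R_y: "?R y = x" using inv_on_spec[OF I_minus_z_adj_S_bij[OF z]] by (simp add: y_def)
    have "U x = U y - z *\<^sub>C y + z *\<^sub>C P y" using U_I_minus_z_adj_S[of y z] R_y by simp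
    then have "U y - z *\<^sub>C y = U x - z *\<^sub>C P y" by simp
    also have "\<dots> = k" using sol by (simp add: char_fun_on_DS[OF U_x_in] y_def)
    finally have "U y - z *\<^sub>C y = k" .
    then have "y = w" using U_minus_z_bij[OF z, of k] w by blast
    then show ?thesis using R_y \<open>?R w = x0\<close> by simp
  qed
  have x0_in: "x0 \<in> V ` K" using U_x0_in V_U by (metis image_eqI)
  have x0_sol: "U x0 - char_fun S z x0 = k" by (simp add: theta_x0 U_x0)
  have solvable: "\<exists>!x. x \<in> V ` K \<and> U x - char_fun S z x = k"
    by (rule ex1I[of _ x0]) (use x0_in x0_sol unique in blast)+
  show "inv_on (V ` K) (\<lambda>x. U x - char_fun S z x) k = x0"
    by (rule inv_on_eq[OF solvable x0_in x0_sol])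
qed

text \<open>The identity of the theorem: both sides equal <k,k> + 2 z <w,k> where w = (U - z)^{-1} k.\<close>
lemma cayley_transform_identity:
  assumes z: "cmod z < 1" and k: "k \<in> K"
  shows "cinner (U (inv_on UNIV (\<lambda>x. U x - z *\<^sub>C x) k) + z *\<^sub>C inv_on UNIV (\<lambda>x. U x - z *\<^sub>C x) k) k
       = cinner ((\<lambda>x. U x + char_fun S z x) (inv_on (V ` K) (\<lambda>x. U x - char_fun S z x) k)) k"
proof -
  define w where "w = inv_on UNIV (\<lambda>x. U x - z *\<^sub>C x) k"
  have w: "U w - z *\<^sub>C w = k" using inv_on_spec[OF U_minus_z_bij[OF z]] by (simp add: w_def)
  define x0 where "x0 = V (k + z *\<^sub>C P w)"
  have lhs: "U w + z *\<^sub>C w = k + z *\<^sub>C w + z *\<^sub>C w" using w by (simp add: algebra_simps)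
  have rhs: "U x0 + char_fun S z x0 = k + z *\<^sub>C P w + z *\<^sub>C P w"
    using DS_solution(1)[OF z k w] by (simp add: x0_def U_V)
  have "cinner (P w) k = cinner w k" by (simp add: proj_selfadjoint proj_fixes[OF k])
  then show ?thesis
    unfolding w_def[symmetric] DS_solution(2)[OF z k w, folded x0_def]
    by (simp only: lhs rhs cinner_add_left cinner_scaleC_left)
qed

end

theorem theorem3p1:
  fixes U :: "'a::chilbert_space \<Rightarrow> 'a" and K :: "'a set" and z :: complex and k :: 'a
  assumes "unitary U"
    and "csubspace K" and "closed K"
    and "cmod z < 1"
    and "k \<in> K"
  shows "let S = (\<lambda>x. U x - proj K (U x));
             Theta = char_fun S z;
             DS = adj U ` K
         in cinner (U (inv_on UNIV (\<lambda>x. U x - z *\<^sub>C x) k) + z *\<^sub>C inv_on UNIV (\<lambda>x. U x - z *\<^sub>C x) k) k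
            = cinner ((\<lambda>x. U x + Theta x) (inv_on DS (\<lambda>x. U x - Theta x) k)) k"
proof -
  interpret unitary_compression K U
    using assms by (simp add: unitary_compression_def unitary_compression_axioms_def closed_csubspace_def)
  show ?thesis
    unfolding Let_def using cayley_transform_identity[OF assms(4,5)] by (simp add: S_def)
qed

end
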